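(* Let $f,g$ satisfy (H1) (see context). For $\theta,H\in\Theta$ and $\gamma>0$ set $S_\gamma(\theta)=\mathrm{Prox}_\gamma(\theta-\gamma H)$ and $\eta=H-\nabla f(\theta)$. Then for any $\theta,H\in\Theta$ and $\gamma>0$, $\|T_\gamma(\theta)-S_\gamma(\theta)\|\le\gamma\|\eta\|$. Moreover, for any $\theta,H\in\Theta$ and $\gamma\in(0,1/L]$, $$|F(S_\gamma(\theta))-F(T_\gamma(\theta))|\le(1+c\gamma L)\|\eta\|\big(\gamma\|\eta\|+(1+c\gamma L)\|\theta-T_\gamma(\theta)\|\big),$$ where $c=0$ if $f$ is convex and $c=1$ otherwise.
   Context: $\Theta$ is a finite-dimensional Euclidean space with norm $\|\cdot\|$. (H1): $g:\Theta\to(-\infty,+\infty]$ convex, not identically $+\infty$, lower semicontinuous; $f:\Theta\to\mathbb R$ continuously differentiable with $L$-Lipschitz gradient. $F=f+g$; $\mathrm{Prox}_\gamma(\theta)=\mathrm{argmin}_{\vartheta}\{g(\vartheta)+\frac1{2\gamma}\|\vartheta-\theta\|^2\}$; $T_\gamma(\theta)=\mathrm{Prox}_\gamma(\theta-\gamma\nabla f(\theta))$. *)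

theory Defs
  imports "HOL-Analysis.Analysis"
begin

definition ereal_convex :: "('a::real_vector \<Rightarrow> ereal) \<Rightarrow> bool" where
  "ereal_convex g \<longleftrightarrow>
     (\<forall>x y. \<forall>t::real. 0 \<le> t \<and> t \<le> 1 \<longrightarrow>
        g ((1 - t) *\<^sub>R x + t *\<^sub>R y) \<le> ereal (1 - t) * g x + ereal t * g y)"

definition ereal_lsc :: "('a::topological_space \<Rightarrow> ereal) \<Rightarrow> bool" where
  "ereal_lsc g \<longleftrightarrow> (\<forall>c::real. closed {x. g x \<le> ereal c})"

definition H1_g :: "('a::euclidean_space \<Rightarrow> ereal) \<Rightarrow> bool" where
  "H1_g g \<longleftrightarrow> ereal_convex g \<and> (\<forall>x. g x \<noteq> -\<infinity>) \<and> (\<exists>x. g x \<noteq> \<infinity>) \<and> ereal_lsc g"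

text \<open>Proximal operator: the (unique, under H1) minimiser of g v + |v - theta|^2/(2 gamma).\<close>
definition Prox :: "('a::euclidean_space \<Rightarrow> ereal) \<Rightarrow> real \<Rightarrow> 'a \<Rightarrow> 'a" where
  "Prox g \<gamma> \<theta> = (THE v. \<forall>w. g v + ereal ((norm (v - \<theta>))\<^sup>2 / (2 * \<gamma>))
                              \<le> g w + ereal ((norm (w - \<theta>))\<^sup>2 / (2 * \<gamma>)))"

definition T_op :: "('a::euclidean_space \<Rightarrow> ereal) \<Rightarrow> ('a \<Rightarrow> 'a) \<Rightarrow> real \<Rightarrow> 'a \<Rightarrow> 'a" where
  "T_op g grad_f \<gamma> \<theta> = Prox g \<gamma> (\<theta> - \<gamma> *\<^sub>R grad_f \<theta>)"

end

theory Submission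
  imports Defs
begin

text \<open>
  Everything rests on the variational inequality of the proximal point: if p = Prox z, then
  g p \<le> g y + \<langle>p - z, y - p\<rangle> / \<gamma> for every y. Adding it for two prox points gives firm
  nonexpansiveness of Prox, hence the first estimate. For the values, the inequality at S with
  competitor T and at T with competitor S, combined with the quadratic upper and lower models of
  an L-smooth f (the lower one without quadratic term when f is convex), bounds F S - F T and
  F T - F S by inner products of d = S - T with \<eta> and with w = (G \<theta> - G T) / \<gamma>, where
  G x = x - \<gamma> \<nabla>f x is the gradient step. G is (1 + \<gamma>L)-Lipschitz, and nonexpansive for
  convex f by co-coercivity of \<nabla>f; together with \<parallel>d\<parallel> \<le> \<gamma>\<parallel>\<eta>\<parallel> this yields the bound.

  Since Prox is defined by a definite description, we also show that the minimiser exists: g lies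
  above a cone, being convex and bounded below on a ball, so the lower semicontinuous objective
  g + \<parallel>\<cdot> - z\<parallel>^2 / (2\<gamma>) has a bounded nonempty sublevel set. Uniqueness is again the variational
  inequality.
\<close>

lemma has_real_derivative_along_line:
  assumes "\<And>x. (f has_derivative (\<lambda>h. grad_f x \<bullet> h)) (at x)"
  shows "((\<lambda>t. f (x + t *\<^sub>R d)) has_real_derivative (grad_f (x + t *\<^sub>R d) \<bullet> d)) (at t)"
proof -
  have "((\<lambda>t. x + t *\<^sub>R d) has_derivative (\<lambda>s. s *\<^sub>R d)) (at t)"
    by (auto intro!: derivative_eq_intros)
  from has_derivative_compose[OF this assms]
  have "((\<lambda>t. f (x + t *\<^sub>R d)) has_derivative (\<lambda>s. grad_f (x + t *\<^sub>R d) \<bullet> (s *\<^sub>R d))) (at t)" .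
  moreover have "(\<lambda>s. grad_f (x + t *\<^sub>R d) \<bullet> (s *\<^sub>R d)) = (*) (grad_f (x + t *\<^sub>R d) \<bullet> d)"
    by (auto simp: fun_eq_iff)
  ultimately show ?thesis
    unfolding has_field_derivative_def by metis
qed

lemma lipschitz_gradient_upper_bound:
  fixes f :: "'a::euclidean_space \<Rightarrow> real"
  assumes grad: "\<And>x. (f has_derivative (\<lambda>h. grad_f x \<bullet> h)) (at x)"
    and lip: "\<And>x y. norm (grad_f x - grad_f y) \<le> L * norm (x - y)"
  shows "f y \<le> f x + grad_f x \<bullet> (y - x) + L / 2 * (norm (y - x))\<^sup>2"
proof -
  define d where "d = y - x"
  define \<psi> where "\<psi> t = f (x + t *\<^sub>R d) - t * (grad_f x \<bullet> d) - L / 2 * t\<^sup>2 * (norm d)\<^sup>2" for t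
  have "\<psi> 1 \<le> \<psi> 0"
  proof (rule DERIV_nonpos_imp_nonincreasing[of 0 1])
    fix t :: real assume t: "0 \<le> t" "t \<le> 1"
    have D: "(\<psi> has_real_derivative
        (grad_f (x + t *\<^sub>R d) - grad_f x) \<bullet> d - L * t * (norm d)\<^sup>2) (at t)"
      unfolding \<psi>_def
      by (auto intro!: derivative_eq_intros has_real_derivative_along_line[OF grad]
          simp: power2_eq_square inner_diff_left)
    have "(grad_f (x + t *\<^sub>R d) - grad_f x) \<bullet> d \<le> norm (grad_f (x + t *\<^sub>R d) - grad_f x) * norm d"
      by (rule norm_cauchy_schwarz)
    also have "\<dots> \<le> L * norm (t *\<^sub>R d) * norm d"
      using lip[of "x + t *\<^sub>R d" x] by (simp add: mult_right_mono)
    also have "\<dots> = L * t * (norm d)\<^sup>2"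
      using t by (simp add: power2_eq_square)
    finally show "\<exists>y. (\<psi> has_real_derivative y) (at t) \<and> y \<le> 0"
      using D by force
  qed simp
  then show ?thesis
    unfolding \<psi>_def d_def by (simp add: inner_commute)
qed

lemma lipschitz_gradient_lower_bound:
  fixes f :: "'a::euclidean_space \<Rightarrow> real"
  assumes grad: "\<And>x. (f has_derivative (\<lambda>h. grad_f x \<bullet> h)) (at x)"
    and lip: "\<And>x y. norm (grad_f x - grad_f y) \<le> L * norm (x - y)"
  shows "f x + grad_f x \<bullet> (y - x) - L / 2 * (norm (y - x))\<^sup>2 \<le> f y"
proof -
  have "((\<lambda>x. - f x) has_derivative (\<lambda>h. - grad_f x \<bullet> h)) (at x)" for x
    using has_derivative_minus[OF grad[of x]] by simp
  moreover have "norm (- grad_f x - - grad_f y) \<le> L * norm (x - y)" for x y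
    using lip[of x y] by (simp add: norm_minus_commute)
  ultimately have "- f y \<le> - f x + - grad_f x \<bullet> (y - x) + L / 2 * (norm (y - x))\<^sup>2"
    by (rule lipschitz_gradient_upper_bound)
  then show ?thesis by simp
qed

lemma convex_on_gradient_inequality:
  fixes f :: "'a::euclidean_space \<Rightarrow> real"
  assumes grad: "\<And>x. (f has_derivative (\<lambda>h. grad_f x \<bullet> h)) (at x)"
    and cvx: "convex_on UNIV f"
  shows "f x + grad_f x \<bullet> (y - x) \<le> f y"
proof -
  define \<phi> where "\<phi> t = f (x + t *\<^sub>R (y - x))" for t
  have "convex_on UNIV \<phi>"
  proof (rule convex_onI)
    fix t u v :: real assume "0 < t" "t < 1"
    have "x + ((1 - t) * u + t * v) *\<^sub>R (y - x)
        = (1 - t) *\<^sub>R (x + u *\<^sub>R (y - x)) + t *\<^sub>R (x + v *\<^sub>R (y - x))"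
      by (simp add: algebra_simps)
    then show "\<phi> ((1 - t) *\<^sub>R u + t *\<^sub>R v) \<le> (1 - t) * \<phi> u + t * \<phi> v"
      unfolding \<phi>_def using convex_onD[OF cvx, of t] \<open>0 < t\<close> \<open>t < 1\<close> by simp
  qed simp
  moreover have "(\<phi> has_real_derivative grad_f x \<bullet> (y - x)) (at 0)"
    unfolding \<phi>_def using has_real_derivative_along_line[OF grad, of x "y - x" 0] by simp
  ultimately have "(grad_f x \<bullet> (y - x)) * (1 - 0) \<le> \<phi> 1 - \<phi> 0"
    by (intro convex_on_imp_above_tangent) auto
  then show ?thesis
    unfolding \<phi>_def by simp
qed

lemma convex_lipschitz_gradient_lower_bound:
  fixes f :: "'a::euclidean_space \<Rightarrow> real"
  assumes grad: "\<And>x. (f has_derivative (\<lambda>h. grad_f x \<bullet> h)) (at x)"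
    and lip: "\<And>x y. norm (grad_f x - grad_f y) \<le> L * norm (x - y)"
    and cvx: "convex_on UNIV f" and "0 < L"
  shows "f x + grad_f x \<bullet> (y - x) + (norm (grad_f y - grad_f x))\<^sup>2 / (2 * L) \<le> f y"
proof -
  define v where "v = grad_f y - grad_f x"
  define w where "w = y - (1 / L) *\<^sub>R v"
  have "f x + grad_f x \<bullet> (w - x) \<le> f w"
    by (rule convex_on_gradient_inequality[OF grad cvx])
  also have "f w \<le> f y + grad_f y \<bullet> (w - y) + L / 2 * (norm (w - y))\<^sup>2"
    by (rule lipschitz_gradient_upper_bound[OF grad lip])
  finally have "f x + grad_f x \<bullet> (y - x) + (grad_f y \<bullet> v - grad_f x \<bullet> v) / L
      - L / 2 * ((norm v)\<^sup>2 / L\<^sup>2) \<le> f y"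
    unfolding w_def using \<open>0 < L\<close>
    by (simp add: inner_diff_right power_divide diff_divide_distrib algebra_simps)
  moreover have "grad_f y \<bullet> v - grad_f x \<bullet> v = (norm v)\<^sup>2"
    unfolding v_def by (simp add: power2_norm_eq_inner inner_diff_left inner_diff_right)
  then have "(grad_f y \<bullet> v - grad_f x \<bullet> v) / L - L / 2 * ((norm v)\<^sup>2 / L\<^sup>2)
      = (norm v)\<^sup>2 / (2 * L)"
    using \<open>0 < L\<close> by (simp add: field_simps power2_eq_square)
  ultimately show ?thesis
    unfolding v_def by linarith
qed

lemma convex_lipschitz_gradient_cocoercive:
  fixes f :: "'a::euclidean_space \<Rightarrow> real"
  assumes grad: "\<And>x. (f has_derivative (\<lambda>h. grad_f x \<bullet> h)) (at x)"
    and lip: "\<And>x y. norm (grad_f x - grad_f y) \<le> L * norm (x - y)"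
    and cvx: "convex_on UNIV f" and "0 < L"
  shows "(norm (grad_f x - grad_f y))\<^sup>2 / L \<le> (grad_f x - grad_f y) \<bullet> (x - y)"
proof -
  have "f x + grad_f x \<bullet> (y - x) + (norm (grad_f y - grad_f x))\<^sup>2 / (2 * L) \<le> f y"
    and "f y + grad_f y \<bullet> (x - y) + (norm (grad_f x - grad_f y))\<^sup>2 / (2 * L) \<le> f x"
    by (rule convex_lipschitz_gradient_lower_bound[OF grad lip cvx \<open>0 < L\<close>])+
  moreover have "(grad_f x - grad_f y) \<bullet> (x - y) = - (grad_f x \<bullet> (y - x)) - grad_f y \<bullet> (x - y)"
    by (simp add: inner_diff_left inner_diff_right)
  ultimately show ?thesis
    by (simp add: norm_minus_commute field_simps)
qed

lemma convex_gradient_step_nonexpansive: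
  fixes f :: "'a::euclidean_space \<Rightarrow> real"
  assumes grad: "\<And>x. (f has_derivative (\<lambda>h. grad_f x \<bullet> h)) (at x)"
    and lip: "\<And>x y. norm (grad_f x - grad_f y) \<le> L * norm (x - y)"
    and cvx: "convex_on UNIV f" and "0 < L" and "0 \<le> \<gamma>" "\<gamma> \<le> 2 / L"
  shows "norm ((x - \<gamma> *\<^sub>R grad_f x) - (y - \<gamma> *\<^sub>R grad_f y)) \<le> norm (x - y)"
proof -
  define u where "u = x - y"
  define v where "v = grad_f x - grad_f y"
  have "(norm (u - \<gamma> *\<^sub>R v))\<^sup>2 = (norm u)\<^sup>2 - 2 * \<gamma> * (v \<bullet> u) + \<gamma>\<^sup>2 * (norm v)\<^sup>2"
    unfolding power2_norm_eq_inner
    by (simp add: inner_diff_left inner_diff_right inner_commute power2_eq_square algebra_simps)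
  also have "\<dots> \<le> (norm u)\<^sup>2 - \<gamma> * (2 / L - \<gamma>) * (norm v)\<^sup>2"
    using mult_left_mono[OF convex_lipschitz_gradient_cocoercive[OF grad lip cvx \<open>0 < L\<close>,
          of x y], of "2 * \<gamma>"] \<open>0 \<le> \<gamma>\<close>
    unfolding u_def v_def by (simp add: power2_eq_square algebra_simps)
  also have "\<dots> \<le> (norm u)\<^sup>2"
    using \<open>0 \<le> \<gamma>\<close> \<open>\<gamma> \<le> 2 / L\<close> by simp
  finally have "norm (u - \<gamma> *\<^sub>R v) \<le> norm u"
    by (rule power2_le_imp_le) simp
  then show ?thesis
    unfolding u_def v_def by (simp add: algebra_simps)
qed

lemma gradient_step_lipschitz:
  assumes lip: "\<And>x y. norm (grad_f x - grad_f y) \<le> L * norm (x - y)" and "0 \<le> \<gamma>"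
  shows "norm ((x - \<gamma> *\<^sub>R grad_f x) - (y - \<gamma> *\<^sub>R grad_f y)) \<le> (1 + \<gamma> * L) * norm (x - y)"
proof -
  have "norm ((x - \<gamma> *\<^sub>R grad_f x) - (y - \<gamma> *\<^sub>R grad_f y))
      \<le> norm (x - y) + norm (\<gamma> *\<^sub>R (grad_f x - grad_f y))"
    using norm_triangle_ineq4[of "x - y" "\<gamma> *\<^sub>R (grad_f x - grad_f y)"]
    by (simp add: algebra_simps)
  also have "\<dots> \<le> norm (x - y) + \<gamma> * (L * norm (x - y))"
    using mult_left_mono[OF lip \<open>0 \<le> \<gamma>\<close>] \<open>0 \<le> \<gamma>\<close> by simp
  finally show ?thesis
    by (simp add: algebra_simps)
qed

lemma ereal_lsc_add_continuous:
  fixes g :: "'a::metric_space \<Rightarrow> ereal"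
  assumes lsc: "ereal_lsc g" and q: "continuous_on UNIV q"
  shows "ereal_lsc (\<lambda>x. g x + ereal (q x))"
  unfolding ereal_lsc_def closed_sequential_limits
proof (intro allI impI, elim conjE)
  fix c :: real and x :: "nat \<Rightarrow> 'a" and l
  assume xs: "\<forall>n. x n \<in> {x. g x + ereal (q x) \<le> ereal c}" and lim: "x \<longlonglongrightarrow> l"
  have ql: "(\<lambda>n. q (x n)) \<longlonglongrightarrow> q l"
    using q lim by (simp add: continuous_on_eq_continuous_at isCont_tendsto_compose)
  have le: "g l \<le> ereal (c - q l + e)" if "e > 0" for e
  proof -
    have "l \<in> {y. g y \<le> ereal (c - q l + e)}"
    proof (rule Lim_in_closed_set[OF _ _ trivial_limit_sequentially lim])
      show "closed {y. g y \<le> ereal (c - q l + e)}"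
        using lsc unfolding ereal_lsc_def by blast
      have "\<forall>\<^sub>F n in sequentially. q l - e < q (x n)"
        using order_tendstoD(1)[OF ql, of "q l - e"] \<open>e > 0\<close> by simp
      then show "\<forall>\<^sub>F n in sequentially. x n \<in> {y. g y \<le> ereal (c - q l + e)}"
      proof (rule eventually_mono)
        fix n assume "q l - e < q (x n)"
        have "g (x n) \<le> ereal (c - q (x n))"
          using spec[OF xs, of n] by (cases "g (x n)") auto
        also have "\<dots> \<le> ereal (c - q l + e)"
          using \<open>q l - e < q (x n)\<close> by simp
        finally show "x n \<in> {y. g y \<le> ereal (c - q l + e)}" by simp
      qed
    qed
    then show ?thesis by simp
  qed
  show "l \<in> {x. g x + ereal (q x) \<le> ereal c}"
  proof (cases "g l")
    case (real r)
    have "r \<le> c - q l"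
      by (rule field_le_epsilon) (use le real in auto)
    then show ?thesis using real by simp
  qed (use le[of 1] in auto)
qed

lemma ereal_lsc_attains_min_on_compact:
  fixes h :: "'a::metric_space \<Rightarrow> ereal"
  assumes "compact K" "K \<noteq> {}" and lsc: "ereal_lsc h"
  shows "\<exists>x\<in>K. \<forall>y\<in>K. h x \<le> h y"
proof -
  define m where "m = (INF y\<in>K. h y)"
  \<comment> \<open>the sublevel sets above the infimum have the finite intersection property on K\<close>
  have "K \<inter> (\<Inter>c\<in>{c. m < ereal c}. {x. h x \<le> ereal c}) \<noteq> {}"
  proof (rule compact_imp_fip_image[OF \<open>compact K\<close>])
    show "closed {x. h x \<le> ereal c}" for c
      using lsc unfolding ereal_lsc_def by blast
  next
    fix C assume "finite C" "C \<subseteq> {c. m < ereal c}"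
    show "K \<inter> (\<Inter>c\<in>C. {x. h x \<le> ereal c}) \<noteq> {}"
    proof (cases "C = {}")
      case False
      then have "m < ereal (Min C)"
        using Min_in[OF \<open>finite C\<close>] \<open>C \<subseteq> {c. m < ereal c}\<close> by auto
      then obtain y where "y \<in> K" "h y < ereal (Min C)"
        unfolding m_def by (auto simp: INF_less_iff)
      then have "y \<in> K \<inter> (\<Inter>c\<in>C. {x. h x \<le> ereal c})"
        using \<open>finite C\<close> by (auto intro: order.trans[OF less_imp_le])
      then show ?thesis by blast
    qed (use \<open>K \<noteq> {}\<close> in simp)
  qed
  then obtain x where x: "x \<in> K" "\<And>c. m < ereal c \<Longrightarrow> h x \<le> ereal c"
    by blast
  have "h x \<le> m"
  proof (rule ccontr)
    assume "\<not> h x \<le> m"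
    then obtain c where "m < ereal c" "ereal c < h x"
      using ereal_dense2 by (metis not_le)
    then show False using x(2) by fastforce
  qed
  then show ?thesis
    using x(1) unfolding m_def by (meson INF_lower order.trans)
qed

lemma ereal_lsc_attains_min:
  fixes h :: "'a::euclidean_space \<Rightarrow> ereal"
  assumes lsc: "ereal_lsc h" and bdd: "bounded {x. h x \<le> ereal c}" and "h x0 \<le> ereal c"
  shows "\<exists>x. \<forall>y. h x \<le> h y"
proof -
  define K where "K = {x. h x \<le> ereal c}"
  have "compact K"
    using bdd lsc unfolding K_def ereal_lsc_def by (simp add: compact_eq_bounded_closed)
  moreover have "x0 \<in> K"
    using \<open>h x0 \<le> ereal c\<close> by (simp add: K_def)
  ultimately obtain x where "x \<in> K" "\<forall>y\<in>K. h x \<le> h y"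
    using ereal_lsc_attains_min_on_compact[OF _ _ lsc] by blast
  then have "h x \<le> h y" for y
    by (cases "y \<in> K") (auto simp: K_def)
  then show ?thesis by blast
qed

lemma ereal_convex_minorant_from_ball:
  fixes g :: "'a::real_normed_vector \<Rightarrow> ereal"
  assumes cvx: "ereal_convex g" and x0: "g x0 = ereal r"
    and ball: "\<And>u. u \<in> cball x0 1 \<Longrightarrow> ereal m \<le> g u"
  shows "ereal (m - (r - m) * norm (v - x0)) \<le> g v"
proof -
  have "m \<le> r"
    using ball[of x0] x0 by simp
  show ?thesis
  proof (cases "norm (v - x0) \<le> 1")
    case True
    then have "ereal m \<le> g v"
      by (intro ball) (simp add: dist_norm norm_minus_commute)
    moreover have "m - (r - m) * norm (v - x0) \<le> m"
      using \<open>m \<le> r\<close> by simp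
    ultimately show ?thesis
      by (meson ereal_less_eq(3) order.trans)
  next
    case False
    define s where "s = norm (v - x0)"
    define t where "t = 1 / s"
    have "1 < s"
      using False by (simp add: s_def)
    then have "0 < t" "t \<le> 1" "t * s = 1"
      by (auto simp: t_def)
    define u where "u = (1 - t) *\<^sub>R x0 + t *\<^sub>R v"
    have "norm (u - x0) = 1"
      using \<open>0 < t\<close> \<open>t * s = 1\<close> unfolding u_def s_def by (simp add: algebra_simps flip: scaleR_diff_right)
    then have "ereal m \<le> g u"
      by (intro ball) (simp add: dist_norm norm_minus_commute)
    also have "g u \<le> ereal (1 - t) * g x0 + ereal t * g v"
      using cvx \<open>0 < t\<close> \<open>t \<le> 1\<close> unfolding ereal_convex_def u_def by simp
    finally have convex_comb: "ereal m \<le> ereal ((1 - t) * r) + ereal t * g v"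
      using x0 by simp
    then show ?thesis
    proof (cases "g v")
      case (real b)
      then have "m * s \<le> ((1 - t) * r + t * b) * s"
        using convex_comb \<open>1 < s\<close> by (simp add: mult_right_mono)
      also have "\<dots> = s * r - r + b"
        using \<open>t * s = 1\<close> by (simp add: algebra_simps)
      finally show ?thesis
        using real \<open>m \<le> r\<close> unfolding s_def by (simp add: algebra_simps)
    qed (use \<open>0 < t\<close> in auto)
  qed
qed

lemma H1_g_cone_minorant:
  fixes g :: "'a::euclidean_space \<Rightarrow> ereal"
  assumes "H1_g g"
  shows "\<exists>c k. 0 \<le> k \<and> (\<forall>v. ereal (c - k * norm v) \<le> g v)"
proof -
  have cvx: "ereal_convex g" and lsc: "ereal_lsc g" and "\<And>x. g x \<noteq> -\<infinity>"
    using assms unfolding H1_g_def by auto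
  obtain x0 r where x0: "g x0 = ereal r"
    using assms unfolding H1_g_def by (metis ereal_cases)
  obtain u where "u \<in> cball x0 1" and u: "\<And>y. y \<in> cball x0 1 \<Longrightarrow> g u \<le> g y"
    using ereal_lsc_attains_min_on_compact[OF compact_cball _ lsc, of x0 1] by force
  moreover have "g u \<noteq> \<infinity>"
    using u[of x0] x0 by auto
  ultimately obtain m where m: "g u = ereal m"
    using \<open>\<And>x. g x \<noteq> -\<infinity>\<close> by (metis ereal_cases)
  have "m \<le> r"
    using u[of x0] m x0 by simp
  have "ereal (m - (r - m) * norm x0 - (r - m) * norm v) \<le> g v" for v
  proof -
    have "(r - m) * norm (v - x0) \<le> (r - m) * (norm v + norm x0)"
      by (rule mult_left_mono[OF norm_triangle_ineq4]) (use \<open>m \<le> r\<close> in simp)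
    then have "m - (r - m) * norm x0 - (r - m) * norm v \<le> m - (r - m) * norm (v - x0)"
      by (simp add: algebra_simps)
    also have "ereal \<dots> \<le> g v"
      by (rule ereal_convex_minorant_from_ball[OF cvx x0]) (use u m in auto)
    finally show ?thesis by simp
  qed
  then show ?thesis
    using \<open>m \<le> r\<close> by (intro exI[of _ "m - (r - m) * norm x0"] exI[of _ "r - m"]) auto
qed

lemma le_of_square_le_affine:
  fixes s a b :: real
  assumes "0 \<le> a" and "s\<^sup>2 \<le> a * s + b"
  shows "s \<le> a + \<bar>b\<bar> + 1"
proof (cases "s \<le> 1")
  case False
  then have "s * s \<le> (a + \<bar>b\<bar>) * s"
    using assms mult_left_mono[of 1 s "\<bar>b\<bar>"] by (simp add: power2_eq_square algebra_simps)
  then show ?thesis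
    using False by simp
qed (use assms in simp)

definition is_prox_point :: "('a::euclidean_space \<Rightarrow> ereal) \<Rightarrow> real \<Rightarrow> 'a \<Rightarrow> 'a \<Rightarrow> bool" where
  "is_prox_point g \<gamma> z p \<longleftrightarrow>
     (\<forall>w. g p + ereal ((norm (p - z))\<^sup>2 / (2 * \<gamma>)) \<le> g w + ereal ((norm (w - z))\<^sup>2 / (2 * \<gamma>)))"

lemma prox_point_exists:
  fixes g :: "'a::euclidean_space \<Rightarrow> ereal"
  assumes hg: "H1_g g" and "0 < \<gamma>"
  shows "\<exists>p. is_prox_point g \<gamma> z p"
proof -
  define q where "q v = (norm (v - z))\<^sup>2 / (2 * \<gamma>)" for v
  define h where "h v = g v + ereal (q v)" for v
  obtain c k where "0 \<le> k" and minorant: "\<And>v. ereal (c - k * norm v) \<le> g v"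
    using H1_g_cone_minorant[OF hg] by blast
  obtain x0 r where x0: "g x0 = ereal r"
    using hg unfolding H1_g_def by (metis ereal_cases)
  define R where "R = r + q x0"
  have "ereal_lsc h"
    unfolding h_def q_def
    by (rule ereal_lsc_add_continuous)
      (use hg \<open>0 < \<gamma>\<close> in \<open>auto simp: H1_g_def intro!: continuous_intros\<close>)
  moreover have "h x0 \<le> ereal R"
    by (simp add: h_def R_def x0)
  moreover have "bounded {v. h v \<le> ereal R}"
  proof -
    define a where "a = 2 * \<gamma> * k"
    define b where "b = 2 * \<gamma> * (R - c + k * norm z)"
    have "norm (v - z) \<le> a + \<bar>b\<bar> + 1" if "h v \<le> ereal R" for v
    proof (rule le_of_square_le_affine)
      show "0 \<le> a"
        using \<open>0 < \<gamma>\<close> \<open>0 \<le> k\<close> by (simp add: a_def)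
      have "ereal (c - k * norm v + q v) \<le> h v"
        using add_right_mono[OF minorant[of v], of "ereal (q v)"] by (simp add: h_def)
      with that have "c - k * norm v + q v \<le> R"
        by (meson ereal_less_eq(3) order.trans)
      moreover have "k * norm v \<le> k * norm (v - z) + k * norm z"
        using mult_left_mono[OF norm_triangle_sub[of v z] \<open>0 \<le> k\<close>] by (simp add: algebra_simps)
      ultimately have "q v \<le> (R - c + k * norm z) + k * norm (v - z)"
        by linarith
      then show "(norm (v - z))\<^sup>2 \<le> a * norm (v - z) + b"
        using \<open>0 < \<gamma>\<close> unfolding a_def b_def q_def by (simp add: field_simps)
    qed
    then show ?thesis
      by (intro bounded_subset[OF bounded_cball[of z "a + \<bar>b\<bar> + 1"]])
        (auto simp: dist_norm norm_minus_commute)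
  qed
  ultimately obtain p where "\<forall>w. h p \<le> h w"
    using ereal_lsc_attains_min by blast
  then show ?thesis
    unfolding is_prox_point_def h_def q_def by blast
qed

lemma is_prox_point_finite:
  assumes hg: "H1_g g" and p: "is_prox_point g \<gamma> z p"
  shows "\<exists>a. g p = ereal a"
proof -
  obtain x0 where "g x0 \<noteq> \<infinity>" and "\<And>x. g x \<noteq> -\<infinity>"
    using hg unfolding H1_g_def by blast
  moreover have "g p + ereal ((norm (p - z))\<^sup>2 / (2 * \<gamma>)) \<le> g x0 + ereal ((norm (x0 - z))\<^sup>2 / (2 * \<gamma>))"
    using p unfolding is_prox_point_def by blast
  ultimately show ?thesis
    by (cases "g p"; cases "g x0") auto
qed

lemma le_of_le_plus_small_multiples:
  fixes a b c :: real
  assumes "\<And>t. 0 < t \<Longrightarrow> t \<le> 1 \<Longrightarrow> a \<le> b + t * c"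
  shows "a \<le> b"
proof (rule field_le_epsilon)
  fix e :: real assume "0 < e"
  define t where "t = min 1 (e / (\<bar>c\<bar> + 1))"
  have "0 < t" "t \<le> 1"
    using \<open>0 < e\<close> by (auto simp: t_def)
  have "t * c \<le> e / (\<bar>c\<bar> + 1) * (\<bar>c\<bar> + 1)"
    by (smt (verit, best) \<open>0 < t\<close> t_def mult_left_mono mult_right_mono abs_ge_self
        min.cobounded2 abs_ge_zero)
  then show "a \<le> b + e"
    using assms[OF \<open>0 < t\<close> \<open>t \<le> 1\<close>] by simp
qed

lemma is_prox_point_variational_ineq:
  assumes cvx: "ereal_convex g" and "0 < \<gamma>" and p: "is_prox_point g \<gamma> z p"
    and "g p = ereal a" and "g y = ereal b"
  shows "a \<le> b + ((p - z) \<bullet> (y - p)) / \<gamma>"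
proof -
  define w where "w = p - z"
  define e where "e = y - p"
  have "a \<le> b + (w \<bullet> e) / \<gamma> + t * ((norm e)\<^sup>2 / (2 * \<gamma>))" if "0 < t" "t \<le> 1" for t
  proof -
    have "(1 - t) *\<^sub>R p + t *\<^sub>R y - z = w + t *\<^sub>R e"
      unfolding w_def e_def by (simp add: algebra_simps)
    then have "g p + ereal ((norm w)\<^sup>2 / (2 * \<gamma>))
        \<le> g ((1 - t) *\<^sub>R p + t *\<^sub>R y) + ereal ((norm (w + t *\<^sub>R e))\<^sup>2 / (2 * \<gamma>))"
      using p unfolding is_prox_point_def w_def by metis
    also have "\<dots> \<le> ereal ((1 - t) * a + t * b) + ereal ((norm (w + t *\<^sub>R e))\<^sup>2 / (2 * \<gamma>))"
    proof (rule add_right_mono)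
      show "g ((1 - t) *\<^sub>R p + t *\<^sub>R y) \<le> ereal ((1 - t) * a + t * b)"
        using cvx that \<open>g p = ereal a\<close> \<open>g y = ereal b\<close>
        unfolding ereal_convex_def by (metis less_imp_le times_ereal.simps(1) plus_ereal.simps(1))
    qed
    finally have "a + (norm w)\<^sup>2 / (2 * \<gamma>) \<le> (1 - t) * a + t * b + (norm (w + t *\<^sub>R e))\<^sup>2 / (2 * \<gamma>)"
      using \<open>g p = ereal a\<close> by simp
    moreover have "(norm (w + t *\<^sub>R e))\<^sup>2 = (norm w)\<^sup>2 + 2 * t * (w \<bullet> e) + t\<^sup>2 * (norm e)\<^sup>2"
      unfolding power2_norm_eq_inner
      by (simp add: inner_add_left inner_add_right inner_commute power2_eq_square algebra_simps)
    ultimately have "t * a \<le> t * (b + (w \<bullet> e) / \<gamma> + t * ((norm e)\<^sup>2 / (2 * \<gamma>)))"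
      using \<open>0 < \<gamma>\<close> by (simp add: field_simps power2_eq_square)
    then show ?thesis
      using \<open>0 < t\<close> by simp
  qed
  then have "a \<le> b + (w \<bullet> e) / \<gamma>"
    by (rule le_of_le_plus_small_multiples)
  then show ?thesis
    by (simp add: w_def e_def)
qed

lemma is_prox_point_firmly_nonexpansive:
  assumes hg: "H1_g g" and "0 < \<gamma>"
    and p1: "is_prox_point g \<gamma> z1 p1" and p2: "is_prox_point g \<gamma> z2 p2"
  shows "(norm (p1 - p2))\<^sup>2 \<le> (z1 - z2) \<bullet> (p1 - p2)"
proof -
  have cvx: "ereal_convex g"
    using hg by (simp add: H1_g_def)
  obtain a1 a2 where a1: "g p1 = ereal a1" and a2: "g p2 = ereal a2"
    using is_prox_point_finite[OF hg p1] is_prox_point_finite[OF hg p2] by blast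
  have "a1 \<le> a2 + ((p1 - z1) \<bullet> (p2 - p1)) / \<gamma>" and "a2 \<le> a1 + ((p2 - z2) \<bullet> (p1 - p2)) / \<gamma>"
    using is_prox_point_variational_ineq[OF cvx \<open>0 < \<gamma>\<close>] p1 p2 a1 a2 by blast+
  then have "0 \<le> ((p1 - z1) \<bullet> (p2 - p1) + (p2 - z2) \<bullet> (p1 - p2)) / \<gamma>"
    by (simp add: add_divide_distrib)
  then have "0 \<le> (p1 - z1) \<bullet> (p2 - p1) + (p2 - z2) \<bullet> (p1 - p2)"
    using \<open>0 < \<gamma>\<close> by (simp add: zero_le_divide_iff)
  moreover have "(p1 - z1) \<bullet> (p2 - p1) + (p2 - z2) \<bullet> (p1 - p2)
      = (z1 - z2) \<bullet> (p1 - p2) - (norm (p1 - p2))\<^sup>2"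
    unfolding power2_norm_eq_inner
    by (simp add: inner_diff_left inner_diff_right inner_commute algebra_simps)
  ultimately show ?thesis
    by simp
qed

lemma is_prox_point_unique:
  assumes "H1_g g" and "0 < \<gamma>" and "is_prox_point g \<gamma> z p1" and "is_prox_point g \<gamma> z p2"
  shows "p1 = p2"
  using is_prox_point_firmly_nonexpansive[OF assms] by simp

lemma Prox_is_prox_point:
  assumes "H1_g g" and "0 < \<gamma>"
  shows "is_prox_point g \<gamma> z (Prox g \<gamma> z)"
proof -
  have "\<exists>!p. is_prox_point g \<gamma> z p"
    using prox_point_exists[OF assms] is_prox_point_unique[OF assms] by blast
  then show ?thesis
    unfolding Prox_def is_prox_point_def[symmetric] by (rule theI')
qed

lemma Prox_nonexpansive:
  assumes "H1_g g" and "0 < \<gamma>"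
  shows "norm (Prox g \<gamma> z1 - Prox g \<gamma> z2) \<le> norm (z1 - z2)"
proof -
  define d where "d = Prox g \<gamma> z1 - Prox g \<gamma> z2"
  have "(norm d)\<^sup>2 \<le> (z1 - z2) \<bullet> d"
    unfolding d_def
    by (rule is_prox_point_firmly_nonexpansive[OF assms Prox_is_prox_point[OF assms]
          Prox_is_prox_point[OF assms]])
  also have "\<dots> \<le> norm (z1 - z2) * norm d"
    by (rule norm_cauchy_schwarz)
  finally have "norm d * norm d \<le> norm (z1 - z2) * norm d"
    by (simp add: power2_eq_square)
  then show ?thesis
    unfolding d_def[symmetric] by (cases "d = 0") (auto simp: mult_le_cancel_right)
qed

lemma prox_point_value_upper_bound:
  assumes cvx: "ereal_convex g" and "0 < \<gamma>" "\<gamma> * L \<le> 1"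
    and p: "is_prox_point g \<gamma> z p" and "g p = ereal b" and "g y = ereal a"
    and upper: "f p \<le> f y + grad_f y \<bullet> (p - y) + L / 2 * (norm (p - y))\<^sup>2"
  shows "f p + b - (f y + a) \<le> (grad_f y + (1 / \<gamma>) *\<^sub>R (z - y)) \<bullet> (p - y)"
proof -
  have "b \<le> a + ((p - z) \<bullet> (y - p)) / \<gamma>"
    by (rule is_prox_point_variational_ineq[OF cvx \<open>0 < \<gamma>\<close> p] assms)+
  also have "(p - z) \<bullet> (y - p) = (z - y) \<bullet> (p - y) - (norm (p - y))\<^sup>2"
    by (simp add: power2_norm_eq_inner inner_diff_left inner_diff_right inner_commute)
  finally have "b \<le> a + ((z - y) \<bullet> (p - y)) / \<gamma> - (norm (p - y))\<^sup>2 / \<gamma>"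
    by (simp add: diff_divide_distrib)
  moreover have "L / 2 * (norm (p - y))\<^sup>2 \<le> (norm (p - y))\<^sup>2 / \<gamma>"
    using mult_right_mono[OF \<open>\<gamma> * L \<le> 1\<close>, of "(norm (p - y))\<^sup>2"] \<open>0 < \<gamma>\<close>
    by (simp add: field_simps mult_ac) (use zero_le_power2[of "norm (p - y)"] in linarith)
  ultimately show ?thesis
    using upper by (simp add: inner_add_left)
qed

lemma prox_point_value_lower_bound:
  assumes cvx: "ereal_convex g" and "0 < \<gamma>"
    and p: "is_prox_point g \<gamma> z p" and "g p = ereal a" and "g y = ereal b"
    and lower: "f p + grad_f p \<bullet> (y - p) - M / 2 * (norm (y - p))\<^sup>2 \<le> f y"
  shows "f p + a - (f y + b) \<le> ((1 / \<gamma>) *\<^sub>R (p - z) - grad_f p) \<bullet> (y - p) + M / 2 * (norm (y - p))\<^sup>2"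
proof -
  have "a \<le> b + ((p - z) \<bullet> (y - p)) / \<gamma>"
    by (rule is_prox_point_variational_ineq[OF cvx \<open>0 < \<gamma>\<close> p] assms)+
  then show ?thesis
    using lower by (simp add: inner_diff_left)
qed

lemma forward_backward_value_perturbation:
  fixes f :: "'a::euclidean_space \<Rightarrow> real" and \<theta> H :: 'a
  assumes hg: "H1_g g" and "0 < \<gamma>" "0 \<le> L" "\<gamma> * L \<le> 1" "0 \<le> c" "c \<le> 1" "1 \<le> \<kappa>"
    and upper: "\<And>x y. f y \<le> f x + grad_f x \<bullet> (y - x) + L / 2 * (norm (y - x))\<^sup>2"
    and lower: "\<And>x y. f x + grad_f x \<bullet> (y - x) - c * L / 2 * (norm (y - x))\<^sup>2 \<le> f y"
    and step: "\<And>x y. norm ((x - \<gamma> *\<^sub>R grad_f x) - (y - \<gamma> *\<^sub>R grad_f y)) \<le> \<kappa> * norm (x - y)"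
  defines "S \<equiv> Prox g \<gamma> (\<theta> - \<gamma> *\<^sub>R H)" and "T \<equiv> T_op g grad_f \<gamma> \<theta>" and "\<eta> \<equiv> H - grad_f \<theta>"
  shows "\<bar>(ereal (f S) + g S) - (ereal (f T) + g T)\<bar>
    \<le> ereal (\<kappa> * norm \<eta> * (\<gamma> * norm \<eta> + \<kappa> * norm (\<theta> - T)))"
proof -
  define d where "d = S - T"
  define w where "w = (1 / \<gamma>) *\<^sub>R ((\<theta> - \<gamma> *\<^sub>R grad_f \<theta>) - (T - \<gamma> *\<^sub>R grad_f T))"
  define N where "N = norm \<eta>"
  define R where "R = norm (\<theta> - T)"
  have cvx: "ereal_convex g"
    using hg by (simp add: H1_g_def)
  have S: "is_prox_point g \<gamma> (\<theta> - \<gamma> *\<^sub>R H) S" and T: "is_prox_point g \<gamma> (\<theta> - \<gamma> *\<^sub>R grad_f \<theta>) T"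
    unfolding S_def T_def T_op_def by (rule Prox_is_prox_point[OF hg \<open>0 < \<gamma>\<close>])+
  obtain a b where a: "g T = ereal a" and b: "g S = ereal b"
    using is_prox_point_finite[OF hg S] is_prox_point_finite[OF hg T] by blast
  have "norm d \<le> norm ((\<theta> - \<gamma> *\<^sub>R H) - (\<theta> - \<gamma> *\<^sub>R grad_f \<theta>))"
    unfolding d_def S_def T_def T_op_def by (rule Prox_nonexpansive[OF hg \<open>0 < \<gamma>\<close>])
  then have dN: "norm d \<le> \<gamma> * N"
    using \<open>0 < \<gamma>\<close> unfolding N_def \<eta>_def
    by (simp add: algebra_simps norm_minus_commute flip: scaleR_diff_right)
  have "\<gamma> * (norm w * norm d) \<le> \<gamma> * (\<kappa> * R * N)"
    using mult_mono[OF _ dN, of "\<gamma> * norm w" "\<kappa> * R"] step[of \<theta> T] \<open>0 < \<gamma>\<close> \<open>1 \<le> \<kappa>\<close>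
    unfolding w_def R_def by (simp add: mult_ac)
  then have wd: "norm w * norm d \<le> \<kappa> * R * N"
    using \<open>0 < \<gamma>\<close> by simp
  have "f S + b - (f T + a) \<le> (w - \<eta>) \<bullet> d"
    using prox_point_value_upper_bound[where f = f and grad_f = grad_f, OF cvx \<open>0 < \<gamma>\<close> \<open>\<gamma> * L \<le> 1\<close> S b a
        upper[where x = T and y = S]]
      \<open>0 < \<gamma>\<close> unfolding w_def \<eta>_def d_def by (simp add: algebra_simps)
  also have "\<dots> \<le> \<kappa> * R * N + \<gamma> * N\<^sup>2"
    using Cauchy_Schwarz_ineq2[of w d] Cauchy_Schwarz_ineq2[of \<eta> d] wd mult_left_mono[OF dN, of N]
    unfolding N_def by (simp add: inner_diff_left power2_eq_square algebra_simps)
  finally have upper_diff: "f S + b - (f T + a) \<le> \<kappa> * R * N + \<gamma> * N\<^sup>2" .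
  have "f T + a - (f S + b) \<le> - (w \<bullet> d) + c * L / 2 * (norm d)\<^sup>2"
    using prox_point_value_lower_bound[where f = f and grad_f = grad_f, OF cvx \<open>0 < \<gamma>\<close> T a b
        lower[where x = T and y = S]]
      \<open>0 < \<gamma>\<close> unfolding w_def d_def by (simp add: algebra_simps)
  also have "\<dots> \<le> \<kappa> * R * N + \<gamma> * N\<^sup>2"
  proof -
    have "c * L * (norm d)\<^sup>2 \<le> L * (norm d)\<^sup>2"
      using \<open>0 \<le> c\<close> \<open>c \<le> 1\<close> \<open>0 \<le> L\<close> by (simp add: mult_left_le_one_le mult.assoc)
    also have "\<dots> \<le> (norm d)\<^sup>2 / \<gamma>"
      using mult_right_mono[OF \<open>\<gamma> * L \<le> 1\<close>, of "(norm d)\<^sup>2"] \<open>0 < \<gamma>\<close>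
      by (simp add: field_simps mult_ac)
    also have "\<dots> \<le> (\<gamma> * N)\<^sup>2 / \<gamma>"
      using power_mono[OF dN] \<open>0 < \<gamma>\<close> by (simp add: divide_right_mono)
    also have "\<dots> = \<gamma> * N\<^sup>2"
      using \<open>0 < \<gamma>\<close> by (simp add: power2_eq_square)
    finally have "c * L / 2 * (norm d)\<^sup>2 \<le> \<gamma> * N\<^sup>2"
      using mult_nonneg_nonneg[OF less_imp_le[OF \<open>0 < \<gamma>\<close>] zero_le_power2[of N]]
      by (simp add: field_simps)
    then show ?thesis
      using Cauchy_Schwarz_ineq2[of w d] wd by (simp add: abs_le_iff)
  qed
  finally have lower_diff: "f T + a - (f S + b) \<le> \<kappa> * R * N + \<gamma> * N\<^sup>2" .
  have "\<kappa> * R * N + \<gamma> * N\<^sup>2 \<le> \<kappa> * N * (\<gamma> * N + \<kappa> * R)"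
    using \<open>1 \<le> \<kappa>\<close> \<open>0 < \<gamma>\<close> mult_right_mono[of 1 \<kappa> "\<gamma> * N\<^sup>2 + \<kappa> * R * N"]
    by (simp add: N_def R_def power2_eq_square algebra_simps)
  then show ?thesis
    using upper_diff lower_diff a b unfolding N_def R_def by (simp add: abs_le_iff)
qed

theorem lemma14:
  fixes f :: "'a::euclidean_space \<Rightarrow> real"
    and grad_f :: "'a \<Rightarrow> 'a"
    and g :: "'a \<Rightarrow> ereal"
    and L :: real
  assumes hg: "H1_g g"
    and hgrad: "\<And>x. (f has_derivative (\<lambda>h. grad_f x \<bullet> h)) (at x)"
    and hL: "L > 0"
    and hLip: "\<And>x y. norm (grad_f x - grad_f y) \<le> L * norm (x - y)"
  shows "(\<forall>\<theta> H \<gamma>. \<gamma> > 0 \<longrightarrow>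
            norm (T_op g grad_f \<gamma> \<theta> - Prox g \<gamma> (\<theta> - \<gamma> *\<^sub>R H))
              \<le> \<gamma> * norm (H - grad_f \<theta>))
       \<and> (\<forall>\<theta> H \<gamma>. 0 < \<gamma> \<and> \<gamma> \<le> 1 / L \<longrightarrow>
            (let c = (if convex_on UNIV f then 0 else 1 :: real);
                 F = (\<lambda>x. ereal (f x) + g x);
                 S = Prox g \<gamma> (\<theta> - \<gamma> *\<^sub>R H);
                 T = T_op g grad_f \<gamma> \<theta>;
                 \<eta> = H - grad_f \<theta>
             in \<bar>F S - F T\<bar> \<le> ereal ((1 + c * \<gamma> * L) * norm \<eta> *
                   (\<gamma> * norm \<eta> + (1 + c * \<gamma> * L) * norm (\<theta> - T)))))"
proof (intro conjI allI impI)
  fix \<theta> H :: 'a and \<gamma> :: real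
  assume "0 < \<gamma>"
  have "norm (T_op g grad_f \<gamma> \<theta> - Prox g \<gamma> (\<theta> - \<gamma> *\<^sub>R H))
      \<le> norm ((\<theta> - \<gamma> *\<^sub>R grad_f \<theta>) - (\<theta> - \<gamma> *\<^sub>R H))"
    unfolding T_op_def by (rule Prox_nonexpansive[OF hg \<open>0 < \<gamma>\<close>])
  then show "norm (T_op g grad_f \<gamma> \<theta> - Prox g \<gamma> (\<theta> - \<gamma> *\<^sub>R H)) \<le> \<gamma> * norm (H - grad_f \<theta>)"
    using \<open>0 < \<gamma>\<close> by (simp add: algebra_simps flip: scaleR_diff_right)
next
  fix \<theta> H :: 'a and \<gamma> :: real
  assume "0 < \<gamma> \<and> \<gamma> \<le> 1 / L"
  then have "0 < \<gamma>" and "\<gamma> * L \<le> 1"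
    using hL by (auto simp: field_simps)
  define c where "c = (if convex_on UNIV f then 0 else 1 :: real)"
  have lower: "f x + grad_f x \<bullet> (y - x) - c * L / 2 * (norm (y - x))\<^sup>2 \<le> f y" for x y
    using convex_on_gradient_inequality[OF hgrad] lipschitz_gradient_lower_bound[OF hgrad hLip]
    by (simp add: c_def)
  have step: "norm ((x - \<gamma> *\<^sub>R grad_f x) - (y - \<gamma> *\<^sub>R grad_f y)) \<le> (1 + c * \<gamma> * L) * norm (x - y)"
    for x y
    using convex_gradient_step_nonexpansive[OF hgrad hLip _ hL, of \<gamma>]
      gradient_step_lipschitz[OF hLip, of \<gamma>] \<open>0 < \<gamma>\<close> \<open>\<gamma> * L \<le> 1\<close> hL
    by (auto simp: c_def field_simps)
  have "0 \<le> c" "c \<le> 1" "1 \<le> 1 + c * \<gamma> * L"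
    using \<open>0 < \<gamma>\<close> hL by (auto simp: c_def)
  from forward_backward_value_perturbation[OF hg \<open>0 < \<gamma>\<close> less_imp_le[OF hL] \<open>\<gamma> * L \<le> 1\<close> this
      lipschitz_gradient_upper_bound[OF hgrad hLip] lower step]
  show "let c = if convex_on UNIV f then 0 else 1; F = \<lambda>x. ereal (f x) + g x;
            S = Prox g \<gamma> (\<theta> - \<gamma> *\<^sub>R H); T = T_op g grad_f \<gamma> \<theta>; \<eta> = H - grad_f \<theta>
        in \<bar>F S - F T\<bar> \<le> ereal ((1 + c * \<gamma> * L) * norm \<eta> *
              (\<gamma> * norm \<eta> + (1 + c * \<gamma> * L) * norm (\<theta> - T)))"
    by (simp add: c_def Let_def)
qed

end
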